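(* Let $I=(T,((U_1,S_1),\dots,(U_k,S_k)))$ be an instance of \textsc{Generalized Graphic Inverse Voronoi in Trees} with $S_i\subseteq W_i$ for all $i$, let $xy\in E_1$ with $x\in W_1$ and $y\in U_1\setminus W_1$, let $\varepsilon>0$, and let $I'$ be the instance obtained from $I$ by expanding the edge $xy$ from $E_1$ by $\varepsilon$. If $\Sigma=\{s_1,\dots,s_k\}$ (with $s_i\in S_i$) is a solution to $I$, then $\Sigma$ is also a solution to $I'$.
   Context: \textsc{Generalized Graphic Inverse Voronoi in Trees}: input is a tree $T$ with positive edge-lengths $\lambda$ and pairs $(U_1,S_1),\dots,(U_k,S_k)$ of subsets of $V(T)$ with $U_1,\dots,U_k$ covering $V(T)$. A solution is $s_1,\dots,s_k\in V(T)$ with $s_i\in S_i$ and $U_i=\mathrm{cell}_T(s_i,\{s_1,\dots,s_k\})$ for all $i$, where $\mathrm{cell}_T(s,\Sigma)=\{x\in V(T)\mid d_T(s,x)\le d_T(s',x)\ \forall s'\in\Sigma\}$ and $d_T$ is the shortest-path distance. For $i\in[k]$, $W_i=U_i\setminus\bigcup_{j\neq i}U_j$ and $E_i=\{uv\in E(T)\mid u\in W_i,\ v\in U_i\setminus W_i\}$. Expansion of $xy\in E_1$ (with $x\in W_1$, $y\in U_1\setminus W_1$) by $\varepsilon$: $T'$ is obtained from $T$ by subdividing $xy$ with a new vertex $y'$, with lengths $\lambda'(xy')=\lambda(xy)$, $\lambda'(yy')=\varepsilon$, and all other edges keeping their lengths; $U_1'$ is the set of vertices of $U_1$ in the component of $T-y$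 containing $x$, together with $y'$; $I'=(T',((U_1',S_1),(U_2,S_2),\dots,(U_k,S_k)))$. *)

theory Defs
  imports Complex_Main
begin

definition walk :: "'v set \<Rightarrow> 'v set set \<Rightarrow> 'v list \<Rightarrow> bool" where
  "walk V E p \<longleftrightarrow> p \<noteq> [] \<and> set p \<subseteq> V \<and>
     (\<forall>(a, b) \<in> set (zip p (tl p)). {a, b} \<in> E)"

definition walk_length :: "('v set \<Rightarrow> real) \<Rightarrow> 'v list \<Rightarrow> real" where
  "walk_length l p = sum_list (map (\<lambda>(a, b). l {a, b}) (zip p (tl p)))"

definition is_tree :: "'v set \<Rightarrow> 'v set set \<Rightarrow> bool" where
  "is_tree V E \<longleftrightarrow> finite V \<and> V \<noteq> {} \<and>
     (\<forall>e \<in> E. \<exists>a b. a \<noteq> b \<and> e = {a, b} \<and> a \<in> V \<and> b \<in> V) \<and>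
     (\<forall>u \<in> V. \<forall>v \<in> V. \<exists>p. walk V E p \<and> hd p = u \<and> last p = v) \<and>
     \<not> (\<exists>p. walk V E p \<and> length p \<ge> 3 \<and> distinct p \<and> {last p, hd p} \<in> E)"

definition tdist :: "'v set \<Rightarrow> 'v set set \<Rightarrow> ('v set \<Rightarrow> real) \<Rightarrow> 'v \<Rightarrow> 'v \<Rightarrow> real" where
  "tdist V E l u v = Inf {walk_length l p | p. walk V E p \<and> hd p = u \<and> last p = v}"

definition cell :: "'v set \<Rightarrow> 'v set set \<Rightarrow> ('v set \<Rightarrow> real) \<Rightarrow> 'v \<Rightarrow> 'v set \<Rightarrow> 'v set" where
  "cell V E l s \<Sigma> = {x \<in> V. \<forall>s' \<in> \<Sigma>. tdist V E l s x \<le> tdist V E l s' x}"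

definition gen_instance ::
  "'v set \<Rightarrow> 'v set set \<Rightarrow> ('v set \<Rightarrow> real) \<Rightarrow> nat \<Rightarrow> (nat \<Rightarrow> 'v set) \<Rightarrow> (nat \<Rightarrow> 'v set) \<Rightarrow> bool" where
  "gen_instance V E l k U S \<longleftrightarrow> is_tree V E \<and> (\<forall>e \<in> E. l e > 0) \<and>
     (\<forall>i \<in> {1..k}. U i \<subseteq> V \<and> S i \<subseteq> V) \<and> (\<Union>i \<in> {1..k}. U i) = V"

definition is_solution ::
  "'v set \<Rightarrow> 'v set set \<Rightarrow> ('v set \<Rightarrow> real) \<Rightarrow> nat \<Rightarrow> (nat \<Rightarrow> 'v set) \<Rightarrow> (nat \<Rightarrow> 'v set) \<Rightarrow> (nat \<Rightarrow> 'v) \<Rightarrow> bool" where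
  "is_solution V E l k U S s \<longleftrightarrow>
     (\<forall>i \<in> {1..k}. s i \<in> S i \<and> U i = cell V E l (s i) (s ` {1..k}))"

definition Wset :: "nat \<Rightarrow> (nat \<Rightarrow> 'v set) \<Rightarrow> nat \<Rightarrow> 'v set" where
  "Wset k U i = U i - (\<Union>j \<in> {1..k} - {i}. U j)"

definition Eset :: "'v set set \<Rightarrow> nat \<Rightarrow> (nat \<Rightarrow> 'v set) \<Rightarrow> nat \<Rightarrow> 'v set set" where
  "Eset E k U i = {{u, v} | u v. {u, v} \<in> E \<and> u \<in> Wset k U i \<and> v \<in> U i - Wset k U i}"

text \<open>Expansion of edge xy by eps, with fresh subdivision vertex y'.\<close>
definition exp_V :: "'v set \<Rightarrow> 'v \<Rightarrow> 'v set" where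
  "exp_V V y' = insert y' V"

definition exp_E :: "'v set set \<Rightarrow> 'v \<Rightarrow> 'v \<Rightarrow> 'v \<Rightarrow> 'v set set" where
  "exp_E E x y y' = (E - {{x, y}}) \<union> {{x, y'}, {y, y'}}"

definition exp_len :: "('v set \<Rightarrow> real) \<Rightarrow> 'v \<Rightarrow> 'v \<Rightarrow> 'v \<Rightarrow> real \<Rightarrow> 'v set \<Rightarrow> real" where
  "exp_len l x y y' eps = (\<lambda>e. if e = {x, y'} then l {x, y} else if e = {y, y'} then eps else l e)"

definition comp_without :: "'v set \<Rightarrow> 'v set set \<Rightarrow> 'v \<Rightarrow> 'v \<Rightarrow> 'v set" where
  "comp_without V E y x = {z. \<exists>p. walk (V - {y}) E p \<and> hd p = x \<and> last p = z}"

definition exp_U1 :: "'v set \<Rightarrow> 'v set set \<Rightarrow> (nat \<Rightarrow> 'v set) \<Rightarrow> 'v \<Rightarrow> 'v \<Rightarrow> 'v \<Rightarrow> 'v set" where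
  "exp_U1 V E U x y y' = insert y' (U 1 \<inter> comp_without V E y x)"

end

theory Submission
  imports Defs
begin

(*
  Let A be the component of T - y containing x.  Since every tree edge is a bridge, the
  expansion leaves all distances between vertices on the same side of the new edge y'y unchanged
  (y' counting as y), and lengthens every path that crosses it by exactly eps.  Hence a site
  is nearest to v in T' iff it is nearest to v in T and lies on the same side as v, as long as
  some site nearest to v in T does.  The latter holds: s_1 lies in A because x belongs to no
  other cell; the other sites nearest to y lie beyond y, so beyond y one of them is nearest
  whenever a site of A is; and on A the site s_1 beats every site beyond y.  Therefore the cell
  of s_1 loses the part beyond y and gains y', while the other cells do not change.
*)

lemma walk_Nil [simp]: "\<not> walk V E []"
  by (simp add: walk_def)

lemma walk_singleton [simp]: "walk V E [a] \<longleftrightarrow> a \<in> V"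
  by (simp add: walk_def)

lemma walk_Cons_Cons [simp]:
  "walk V E (a # b # p) \<longleftrightarrow> a \<in> V \<and> {a, b} \<in> E \<and> walk V E (b # p)"
  by (auto simp add: walk_def)

lemma walk_length_singleton [simp]: "walk_length l [a] = 0"
  by (simp add: walk_length_def)

lemma walk_length_Cons_Cons [simp]:
  "walk_length l (a # b # p) = l {a, b} + walk_length l (b # p)"
  by (simp add: walk_length_def)

lemma walk_append_iff:
  assumes "p \<noteq> []" "q \<noteq> []"
  shows "walk V E (p @ q) \<longleftrightarrow> walk V E p \<and> walk V E q \<and> {last p, hd q} \<in> E"
  using assms
proof (induction p rule: induct_list012)
  case (2 a)
  then show ?case by (cases q) auto
qed auto

lemma walk_length_append:
  assumes "p \<noteq> []" "q \<noteq> []"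
  shows "walk_length l (p @ q) = walk_length l p + l {last p, hd q} + walk_length l q"
  using assms
proof (induction p rule: induct_list012)
  case (2 a)
  then show ?case by (cases q) auto
qed auto

lemma walk_rev: "walk V E p \<Longrightarrow> walk V E (rev p)"
proof (induction p rule: induct_list012)
  case (3 a b p)
  then have "walk V E (rev (b # p) @ [a])"
    by (subst walk_append_iff) (auto simp: last_rev insert_commute)
  then show ?case by simp
qed auto

lemma walk_join:
  assumes "walk V E p" "walk V E q" "last p = hd q"
  shows "walk V E (p @ tl q)" "walk_length l (p @ tl q) = walk_length l p + walk_length l q"
proof -
  have "walk V E (p @ tl q) \<and> walk_length l (p @ tl q) = walk_length l p + walk_length l q"
  proof (cases "tl q")
    case Nil
    then show ?thesis using assms by (cases q) auto
  next
    case (Cons b r)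
    then obtain c where "q = c # b # r" by (cases q) auto
    moreover have "p \<noteq> []" using assms(1) by auto
    ultimately show ?thesis
      using assms walk_append_iff[of p "b # r" V E] walk_length_append[of p "b # r" l] by auto
  qed
  then show "walk V E (p @ tl q)" "walk_length l (p @ tl q) = walk_length l p + walk_length l q"
    by auto
qed

lemma walk_subset: "walk W E p \<Longrightarrow> W \<subseteq> V \<Longrightarrow> walk V E p"
  by (auto simp: walk_def)

lemma walk_restrict: "walk V E p \<Longrightarrow> set p \<subseteq> W \<Longrightarrow> walk W E p"
  by (auto simp: walk_def)

lemma walk_ends_in: "walk V E p \<Longrightarrow> hd p \<in> V \<and> last p \<in> V"
  by (auto simp: walk_def)

lemma walk_cong:
  assumes "\<And>a b. a \<in> W \<Longrightarrow> b \<in> W \<Longrightarrow> {a, b} \<in> E \<longleftrightarrow> {a, b} \<in> F"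
  shows "walk W E p \<longleftrightarrow> walk W F p"
  using assms by (induction p rule: induct_list012) (auto dest: walk_ends_in)

lemma walk_length_cong:
  assumes "\<And>a b. a \<in> W \<Longrightarrow> b \<in> W \<Longrightarrow> {a, b} \<in> E \<Longrightarrow> l {a, b} = m {a, b}"
  shows "walk W E p \<Longrightarrow> walk_length l p = walk_length m p"
  using assms by (induction p rule: induct_list012) (auto dest: walk_ends_in)

lemma walk_length_nonneg: "\<forall>e\<in>E. 0 \<le> l e \<Longrightarrow> walk V E p \<Longrightarrow> 0 \<le> walk_length l p"
  by (induction p rule: induct_list012) auto

lemma walk_length_ge_potential:
  assumes "\<And>a b. a \<in> V \<Longrightarrow> b \<in> V \<Longrightarrow> {a, b} \<in> E \<Longrightarrow> f b - f a \<le> l {a, b}"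
  shows "walk V E p \<Longrightarrow> f (last p) - f (hd p) \<le> walk_length l p"
proof (induction p rule: induct_list012)
  case (3 a b p)
  then have "f (last (b # p)) - f b \<le> walk_length l (b # p)" by auto
  moreover have "f b - f a \<le> l {a, b}" using 3 assms by (cases p) auto
  ultimately show ?case by simp
qed auto

lemma walk_exit_decomp:
  assumes p: "walk V E p" and start: "hd p \<in> W" and leaves: "\<not> set p \<subseteq> W"
  obtains p1 p2 where "p = p1 @ p2" "walk W E p1" "hd p1 = hd p" "p2 \<noteq> []" "hd p2 \<notin> W"
    "{last p1, hd p2} \<in> E"
proof
  let ?p1 = "takeWhile (\<lambda>v. v \<in> W) p" and ?p2 = "dropWhile (\<lambda>v. v \<in> W) p"
  show split: "p = ?p1 @ ?p2" by simp
  obtain a r where ar: "p = a # r" using p by (cases p) auto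
  then have p1: "?p1 \<noteq> []" "hd ?p1 = hd p" using start by auto
  show "?p2 \<noteq> []" using leaves by (auto simp: dropWhile_eq_Nil_conv)
  then show "hd ?p2 \<notin> W" by (rule hd_dropWhile)
  have "walk V E ?p1 \<and> {last ?p1, hd ?p2} \<in> E"
    using p split walk_append_iff[OF p1(1) \<open>?p2 \<noteq> []\<close>, of V E] by simp
  then show "walk W E ?p1" "{last ?p1, hd ?p2} \<in> E"
    by (auto intro: walk_restrict dest: set_takeWhileD)
  show "hd ?p1 = hd p" by (fact p1(2))
qed

lemma walk_distinct:
  "walk V E p \<Longrightarrow> \<exists>q. walk V E q \<and> distinct q \<and> hd q = hd p \<and> last q = last p \<and> set q \<subseteq> set p"
proof (induction "length p" arbitrary: p rule: less_induct)
  case less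
  show ?case
  proof (cases "distinct p")
    case False
    then obtain xs ys zs u where p: "p = xs @ [u] @ ys @ [u] @ zs"
      using not_distinct_decomp by blast
    let ?q = "xs @ [u] @ zs"
    have loop: "walk V E (xs @ [u] @ ys)" and tail: "walk V E ([u] @ zs)"
      using less.prems p walk_append_iff[of "xs @ [u] @ ys" "[u] @ zs" V E] by auto
    have "walk V E (xs @ [u])"
      using loop walk_append_iff[of "xs @ [u]" ys V E] by (cases "ys = []") auto
    then have "walk V E ?q"
      using tail walk_append_iff[of xs "[u]" V E] walk_append_iff[of xs "[u] @ zs" V E]
      by (cases "xs = []") auto
    moreover have "length ?q < length p" "hd ?q = hd p" "last ?q = last p" "set ?q \<subseteq> set p"
      using p by (auto simp: hd_append)
    ultimately show ?thesis using less.hyps by fastforce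
  qed (use less.prems in blast)
qed

section \<open>Reachability and shortest-path distance\<close>

definition reachable :: "'v set \<Rightarrow> 'v set set \<Rightarrow> 'v \<Rightarrow> 'v \<Rightarrow> bool" where
  "reachable W E u v \<longleftrightarrow> (\<exists>p. walk W E p \<and> hd p = u \<and> last p = v)"

definition connected_graph :: "'v set \<Rightarrow> 'v set set \<Rightarrow> bool" where
  "connected_graph W E \<longleftrightarrow> (\<forall>u\<in>W. \<forall>v\<in>W. reachable W E u v)"

lemma reachable_refl: "u \<in> W \<Longrightarrow> reachable W E u u"
  unfolding reachable_def by (rule exI[of _ "[u]"]) simp

lemma reachable_edge: "u \<in> W \<Longrightarrow> v \<in> W \<Longrightarrow> {u, v} \<in> E \<Longrightarrow> reachable W E u v"
  unfolding reachable_def by (rule exI[of _ "[u, v]"]) simp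

lemma reachable_sym: "reachable W E u v \<Longrightarrow> reachable W E v u"
  unfolding reachable_def by (metis walk_rev hd_rev last_rev)

lemma reachable_trans: "reachable W E u v \<Longrightarrow> reachable W E v w \<Longrightarrow> reachable W E u w"
  unfolding reachable_def
proof (elim exE conjE)
  fix p q assume "walk W E p" "hd p = u" "last p = v" "walk W E q" "hd q = v" "last q = w"
  then show "\<exists>r. walk W E r \<and> hd r = u \<and> last r = w"
    using walk_join(1)[of W E p q] by (intro exI[of _ "p @ tl q"]) (cases q; cases p; auto)
qed

lemma reachable_subset: "reachable W E u v \<Longrightarrow> W \<subseteq> V \<Longrightarrow> reachable V E u v"
  unfolding reachable_def using walk_subset by blast

lemma connected_graph_singleton: "connected_graph {u} E"
  by (simp add: connected_graph_def reachable_refl)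

lemma connected_graph_hub:
  assumes "\<And>u. u \<in> W \<Longrightarrow> reachable W E u h"
  shows "connected_graph W E"
  using assms unfolding connected_graph_def by (metis reachable_sym reachable_trans)

lemma connected_graph_Un_edge:
  assumes A: "connected_graph A E" and B: "connected_graph B E"
    and xy: "x \<in> A" "y \<in> B" "{x, y} \<in> E"
  shows "connected_graph (A \<union> B) E"
proof (rule connected_graph_hub)
  fix u assume u: "u \<in> A \<union> B"
  show "reachable (A \<union> B) E u x"
  proof (cases "u \<in> A")
    case True
    then show ?thesis using A xy by (auto simp: connected_graph_def intro: reachable_subset)
  next
    case False
    then have "reachable (A \<union> B) E u y"
      using B xy u by (auto simp: connected_graph_def intro: reachable_subset)
    moreover have "reachable (A \<union> B) E y x"
      using xy by (intro reachable_edge) (auto simp: insert_commute)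
    ultimately show ?thesis by (rule reachable_trans)
  qed
qed

lemma reachable_cong:
  assumes "\<And>a b. a \<in> W \<Longrightarrow> b \<in> W \<Longrightarrow> {a, b} \<in> E \<longleftrightarrow> {a, b} \<in> F"
  shows "reachable W E = reachable W F"
  using walk_cong[OF assms] by (auto simp: reachable_def fun_eq_iff)

lemma tdist_cong:
  assumes "\<And>a b. a \<in> W \<Longrightarrow> b \<in> W \<Longrightarrow> {a, b} \<in> E \<longleftrightarrow> {a, b} \<in> F"
    and "\<And>a b. a \<in> W \<Longrightarrow> b \<in> W \<Longrightarrow> {a, b} \<in> E \<Longrightarrow> l {a, b} = m {a, b}"
  shows "tdist W E l = tdist W F m"
proof -
  have "{walk_length l p |p. walk W E p \<and> hd p = u \<and> last p = v} =
        {walk_length m p |p. walk W F p \<and> hd p = u \<and> last p = v}" for u v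
    using walk_cong[of W E F, OF assms(1)] walk_length_cong[of W E l m, OF assms(2)] by force
  then show ?thesis by (simp add: tdist_def fun_eq_iff)
qed

lemma tdist_le_walk_length:
  assumes "\<forall>e\<in>E. 0 \<le> l e" "walk V E p" "hd p = u" "last p = v"
  shows "tdist V E l u v \<le> walk_length l p"
  unfolding tdist_def
  by (rule cInf_lower) (use assms walk_length_nonneg[of E l V] in \<open>auto intro!: bdd_belowI[of _ 0]\<close>)

lemma tdist_greatest:
  assumes "reachable V E u v" "\<And>p. walk V E p \<Longrightarrow> hd p = u \<Longrightarrow> last p = v \<Longrightarrow> c \<le> walk_length l p"
  shows "c \<le> tdist V E l u v"
  using assms unfolding tdist_def reachable_def by (intro cInf_greatest) auto

lemma tdist_self:
  assumes "\<forall>e\<in>E. 0 \<le> l e" "u \<in> V"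
  shows "tdist V E l u u = 0"
proof (rule antisym)
  show "tdist V E l u u \<le> 0" using tdist_le_walk_length[of E l V "[u]"] assms by simp
  show "0 \<le> tdist V E l u u"
    using assms walk_length_nonneg[of E l V] by (intro tdist_greatest reachable_refl) auto
qed

lemma tdist_edge_le:
  "\<forall>e\<in>E. 0 \<le> l e \<Longrightarrow> u \<in> V \<Longrightarrow> v \<in> V \<Longrightarrow> {u, v} \<in> E \<Longrightarrow> tdist V E l u v \<le> l {u, v}"
  using tdist_le_walk_length[of E l V "[u, v]" u v] by simp

lemma tdist_triangle:
  assumes nonneg: "\<forall>e\<in>E. 0 \<le> l e" and uv: "reachable V E u v" and vw: "reachable V E v w"
  shows "tdist V E l u w \<le> tdist V E l u v + tdist V E l v w"
proof -
  have "tdist V E l u w - walk_length l q \<le> tdist V E l u v"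
    if q: "walk V E q" "hd q = v" "last q = w" for q
  proof (rule tdist_greatest[OF uv])
    fix p assume p: "walk V E p" "hd p = u" "last p = v"
    have "hd (p @ tl q) = u" "last (p @ tl q) = w"
      using p q by (cases p; cases q; auto)+
    then have "tdist V E l u w \<le> walk_length l (p @ tl q)"
      using tdist_le_walk_length[OF nonneg walk_join(1)[OF p(1) q(1)]] p q by simp
    then have "tdist V E l u w \<le> walk_length l p + walk_length l q"
      using walk_join(2)[OF p(1) q(1)] p q by simp
    then show "tdist V E l u w - walk_length l q \<le> walk_length l p" by simp
  qed
  then have "tdist V E l u w - tdist V E l u v \<le> tdist V E l v w"
    by (intro tdist_greatest[OF vw]) force
  then show ?thesis by simp
qed

lemma tdist_step_le:
  assumes "\<forall>e\<in>E. 0 \<le> l e" "connected_graph V E" "s \<in> V" "a \<in> V" "b \<in> V" "{a, b} \<in> E"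
  shows "tdist V E l s b \<le> tdist V E l s a + l {a, b}"
  using assms tdist_triangle[of E l V s a b] tdist_edge_le[of E l a V b]
  by (force simp: connected_graph_def)

lemma tdist_ge_potential:
  assumes "reachable V E u v"
    and "\<And>a b. a \<in> V \<Longrightarrow> b \<in> V \<Longrightarrow> {a, b} \<in> E \<Longrightarrow> f b - f a \<le> l {a, b}"
  shows "f v - f u \<le> tdist V E l u v"
  using assms walk_length_ge_potential[of V E f l] by (intro tdist_greatest) auto

lemma tdist_subset_le:
  assumes "\<forall>e\<in>E. 0 \<le> l e" "reachable W E u v" "W \<subseteq> V"
  shows "tdist V E l u v \<le> tdist W E l u v"
  using assms walk_subset[of W E _ V] tdist_le_walk_length[of E l V] by (intro tdist_greatest) auto

section \<open>Distances across a bridge\<close>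

locale bridge_cut =
  fixes V :: "'v set" and E :: "'v set set" and l :: "'v set \<Rightarrow> real"
    and A B :: "'v set" and x y :: 'v
  assumes nonneg: "\<forall>e\<in>E. 0 \<le> l e"
    and partition: "V = A \<union> B" "A \<inter> B = {}"
    and ends: "x \<in> A" "y \<in> B" "{x, y} \<in> E"
    and only_bridge: "\<And>a b. {a, b} \<in> E \<Longrightarrow> a \<in> A \<Longrightarrow> b \<in> B \<Longrightarrow> a = x \<and> b = y"
    and connected_A: "connected_graph A E" and connected_B: "connected_graph B E"
begin

lemma swap: "bridge_cut V E l B A y x"
proof
  show "\<forall>e\<in>E. 0 \<le> l e" by (fact nonneg)
  show "V = B \<union> A" "B \<inter> A = {}" using partition by auto
  show "y \<in> B" "x \<in> A" "{y, x} \<in> E" using ends by (auto simp: insert_commute)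
  show "a = y \<and> b = x" if "{a, b} \<in> E" "a \<in> B" "b \<in> A" for a b
    using only_bridge[of b a] that by (simp add: insert_commute)
  show "connected_graph B E" "connected_graph A E" by (fact connected_B connected_A)+
qed

lemma connected: "connected_graph V E"
  using connected_graph_Un_edge[OF connected_A connected_B ends] partition by simp

lemma tdist_across_le:
  assumes s: "s \<in> A" and v: "v \<in> B"
  shows "tdist V E l s v \<le> tdist A E l s x + l {x, y} + tdist B E l y v"
proof -
  have sV: "s \<in> V" and xV: "x \<in> V" and yV: "y \<in> V" and vV: "v \<in> V"
    using s v ends partition by auto
  have reach: "reachable V E a b" if "a \<in> V" "b \<in> V" for a b
    using connected that by (simp add: connected_graph_def)
  have "tdist V E l s v \<le> tdist V E l s x + tdist V E l x y + tdist V E l y v"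
    using tdist_triangle[OF nonneg reach reach, of s x v] tdist_triangle[OF nonneg reach reach, of x y v]
      sV xV yV vV by simp
  moreover have "tdist V E l s x \<le> tdist A E l s x"
    using tdist_subset_le[OF nonneg] connected_A s ends partition by (auto simp: connected_graph_def)
  moreover have "tdist V E l y v \<le> tdist B E l y v"
    using tdist_subset_le[OF nonneg] connected_B v ends partition by (auto simp: connected_graph_def)
  moreover have "tdist V E l x y \<le> l {x, y}" using tdist_edge_le[OF nonneg xV yV ends(3)] .
  ultimately show ?thesis by simp
qed

text \<open>The right-hand side, as a function of v, vanishes at s and grows by at most l {a, b}
  along every edge ab, so it is a lower bound; the upper bound is the triangle inequality.\<close>

lemma tdist_eq_through_parts:
  assumes s: "s \<in> A" and v: "v \<in> V"
  shows "tdist V E l s v =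
    (if v \<in> A then tdist A E l s v else tdist A E l s x + l {x, y} + tdist B E l y v)"
proof -
  define f where "f w = (if w \<in> A then tdist A E l s w else tdist A E l s x + l {x, y} + tdist B E l y w)"
    for w
  have "f b - f a \<le> l {a, b}" if ab: "a \<in> V" "b \<in> V" "{a, b} \<in> E" for a b
  proof -
    consider "a \<in> A" "b \<in> A" | "a \<in> A" "b \<in> B" | "a \<in> B" "b \<in> A" | "a \<in> B" "b \<in> B"
      using ab partition by blast
    then show ?thesis
    proof cases
      case 1
      then show ?thesis using tdist_step_le[OF nonneg connected_A s _ _ ab(3)] by (simp add: f_def)
    next
      case 2
      then have "a = x" "b = y" using only_bridge ab by auto
      then show ?thesis using 2 partition tdist_self[OF nonneg ends(2)] by (auto simp: f_def)
    next
      case 3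
      then have "a = y" "b = x" using only_bridge[of b a] ab by (auto simp: insert_commute)
      then show ?thesis
        using 3 partition tdist_self[OF nonneg ends(2)] nonneg ends(3)
        by (auto simp: f_def insert_commute)
    next
      case 4
      then show ?thesis
        using partition tdist_step_le[OF nonneg connected_B ends(2) _ _ ab(3)] by (auto simp: f_def)
    qed
  qed
  moreover have "f s = 0" using tdist_self[OF nonneg s] s by (simp add: f_def)
  ultimately have "f v \<le> tdist V E l s v"
    using tdist_ge_potential[of V E s v f l] connected s v partition
    by (auto simp: connected_graph_def)
  moreover have "tdist V E l s v \<le> f v"
    using tdist_subset_le[OF nonneg] connected_A s v partition tdist_across_le[OF s]
    by (auto simp: f_def connected_graph_def)
  ultimately show ?thesis by (simp add: f_def)
qed

lemma tdist_within:
  "s \<in> A \<Longrightarrow> v \<in> A \<Longrightarrow> tdist V E l s v = tdist A E l s v"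
  using tdist_eq_through_parts partition by simp

lemma tdist_across:
  "s \<in> A \<Longrightarrow> v \<in> B \<Longrightarrow> tdist V E l s v = tdist A E l s x + l {x, y} + tdist B E l y v"
  using tdist_eq_through_parts partition by auto

lemma tdist_through_bridge:
  assumes "s \<in> A" "v \<in> B"
  shows "tdist V E l s v = tdist V E l s x + l {x, y} + tdist V E l y v"
  using tdist_across[OF assms] tdist_within[OF assms(1) ends(1)]
    bridge_cut.tdist_within[OF swap ends(2) assms(2)] by simp

end

section \<open>Tree edges are bridges\<close>

locale tree_edge =
  fixes V :: "'v set" and E :: "'v set set" and x y :: 'v
  assumes tree: "is_tree V E" and edge: "{x, y} \<in> E"
begin

abbreviation A :: "'v set" where "A \<equiv> comp_without V E y x"

lemma edge_subset: "e \<in> E \<Longrightarrow> e \<subseteq> V"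
proof -
  assume "e \<in> E"
  then obtain a b where "e = {a, b}" "a \<in> V" "b \<in> V"
    using tree unfolding is_tree_def by meson
  then show ?thesis by simp
qed

lemma edge_ends: "{a, b} \<in> E \<Longrightarrow> a \<in> V \<and> b \<in> V \<and> a \<noteq> b"
  using tree unfolding is_tree_def by (metis doubleton_eq_iff insertI1 insert_commute)

lemma x_in_V: "x \<in> V" and y_in_V: "y \<in> V" and x_neq_y: "x \<noteq> y"
  using edge_ends[OF edge] by auto

lemma connected: "connected_graph V E"
  using tree unfolding is_tree_def connected_graph_def reachable_def by blast

lemma comp_without_eq: "A = {z. reachable (V - {y}) E x z}"
  by (simp add: comp_without_def reachable_def)

lemma comp_subset: "A \<subseteq> V - {y}"
  unfolding comp_without_def using walk_ends_in by blast

lemma x_in_comp: "x \<in> A"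
  unfolding comp_without_eq using x_in_V x_neq_y by (auto intro: reachable_refl)

lemma y_notin_comp: "y \<notin> A"
  using comp_subset by auto

lemma comp_closed:
  assumes "a \<in> A" "{a, b} \<in> E" "b \<noteq> y"
  shows "b \<in> A"
proof -
  have "reachable (V - {y}) E a b"
    using assms comp_subset edge_ends[OF assms(2)] by (intro reachable_edge) auto
  then show ?thesis using assms(1) unfolding comp_without_eq by (auto intro: reachable_trans)
qed

text \<open>A second edge leaving the component would close a cycle through the edge xy.\<close>

lemma comp_only_bridge:
  assumes ab: "{a, b} \<in> E" "a \<in> A" "b \<in> V - A"
  shows "a = x \<and> b = y"
proof -
  have b: "b = y" using comp_closed[OF ab(2,1)] ab(3) by blast
  show ?thesis
  proof (rule ccontr)
    assume "\<not> (a = x \<and> b = y)"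
    with b have "a \<noteq> x" by simp
    obtain p where "walk (V - {y}) E p" "hd p = x" "last p = a"
      using ab(2) unfolding comp_without_def by blast
    then obtain q where q: "walk (V - {y}) E q" "distinct q" "hd q = x" "last q = a"
      using walk_distinct by metis
    have "q \<noteq> []" using q by auto
    have "length q \<noteq> 1"
      using q \<open>a \<noteq> x\<close> by (auto simp: length_Suc_conv)
    then have "length (q @ [y]) \<ge> 3"
      using \<open>q \<noteq> []\<close> by (cases q) (auto simp: Suc_le_eq)
    moreover have "walk V E (q @ [y])"
      using walk_append_iff[of q "[y]" V E] walk_subset[OF q(1)] \<open>q \<noteq> []\<close> q ab(1) b y_in_V by auto
    moreover have "distinct (q @ [y])" using q(1,2) by (auto simp: walk_def)
    moreover have "{last (q @ [y]), hd (q @ [y])} \<in> E"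
      using edge q(3) \<open>q \<noteq> []\<close> by (simp add: insert_commute)
    ultimately show False using tree unfolding is_tree_def by blast
  qed
qed

lemma connected_comp: "connected_graph A E"
proof (rule connected_graph_hub)
  fix u assume "u \<in> A"
  then obtain p where p: "walk (V - {y}) E p" "hd p = x" "last p = u"
    unfolding comp_without_def by blast
  have "set p \<subseteq> A"
  proof (rule ccontr)
    assume "\<not> set p \<subseteq> A"
    then obtain p1 p2 where "p = p1 @ p2" "walk A E p1" "p2 \<noteq> []" "hd p2 \<notin> A"
      "{last p1, hd p2} \<in> E"
      using walk_exit_decomp[OF p(1)] p(2) x_in_comp by metis
    moreover have "last p1 \<in> A" using walk_ends_in[OF \<open>walk A E p1\<close>] by simp
    moreover have "hd p2 \<in> set p" using \<open>p = p1 @ p2\<close> \<open>p2 \<noteq> []\<close> by simp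
    then have "hd p2 \<noteq> y" using p(1) by (auto simp: walk_def)
    ultimately show False using comp_closed by blast
  qed
  then have "reachable A E x u" using p walk_restrict unfolding reachable_def by blast
  then show "reachable A E u x" by (rule reachable_sym)
qed

lemma connected_comp_complement: "connected_graph (V - A) E"
proof (rule connected_graph_hub)
  fix u assume u: "u \<in> V - A"
  obtain p where p: "walk V E p" "hd p = u" "last p = y"
    using connected u y_in_V unfolding connected_graph_def reachable_def by blast
  show "reachable (V - A) E u y"
  proof (cases "set p \<subseteq> V - A")
    case True
    then show ?thesis using p walk_restrict unfolding reachable_def by blast
  next
    case False
    then obtain p1 p2 where p12: "p = p1 @ p2" "walk (V - A) E p1" "hd p1 = u" "p2 \<noteq> []"
      "hd p2 \<notin> V - A" "{last p1, hd p2} \<in> E"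
      using walk_exit_decomp[OF p(1)] p(2) u by metis
    have "hd p2 \<in> set p" using p12(1,4) by simp
    then have "hd p2 \<in> A" using p12(5) p(1) by (auto simp: walk_def)
    moreover have "last p1 \<in> V - A" using walk_ends_in[OF p12(2)] by simp
    ultimately have "last p1 = y"
      using comp_only_bridge[of "hd p2" "last p1"] p12(6) by (simp add: insert_commute)
    then show ?thesis using p12 unfolding reachable_def by blast
  qed
qed

lemma bridge_cut_comp:
  assumes "\<forall>e\<in>E. 0 \<le> l e"
  shows "bridge_cut V E l A (V - A) x y"
proof
  show "V = A \<union> (V - A)" using comp_subset by auto
qed (use assms x_in_comp y_in_V y_notin_comp edge comp_only_bridge connected_comp
      connected_comp_complement in auto)

end

section \<open>Distances after expanding an edge\<close>

locale edge_expansion = tree_edge V E x y for V :: "'v set" and E x y +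
  fixes l :: "'v set \<Rightarrow> real" and y' :: 'v and eps :: real
  assumes pos: "\<forall>e\<in>E. 0 < l e" and fresh: "y' \<notin> V" and eps_pos: "0 < eps"
begin

abbreviation E' :: "'v set set" where "E' \<equiv> exp_E E x y y'"
abbreviation l' :: "'v set \<Rightarrow> real" where "l' \<equiv> exp_len l x y y' eps"
abbreviation d :: "'v \<Rightarrow> 'v \<Rightarrow> real" where "d \<equiv> tdist V E l"
abbreviation d' :: "'v \<Rightarrow> 'v \<Rightarrow> real" where "d' \<equiv> tdist (exp_V V y') E' l'"

lemma nonneg: "\<forall>e\<in>E. 0 \<le> l e"
  using pos by (simp add: less_imp_le)

lemma bridge_length_pos: "0 < l {x, y}"
  using pos edge by blast

lemma cut: "bridge_cut V E l A (V - A) x y"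
  by (rule bridge_cut_comp[OF nonneg])

lemma d_self: "v \<in> V \<Longrightarrow> d v v = 0"
  by (rule tdist_self[OF nonneg])

lemma d_triangle: "a \<in> V \<Longrightarrow> b \<in> V \<Longrightarrow> c \<in> V \<Longrightarrow> d a c \<le> d a b + d b c"
  using tdist_triangle[OF nonneg] connected unfolding connected_graph_def by blast

lemma d_edge: "d y x \<le> l {x, y}"
  using tdist_edge_le[OF nonneg y_in_V x_in_V] edge by (simp add: insert_commute)

lemma d_from_comp: "s \<in> A \<Longrightarrow> v \<in> V - A \<Longrightarrow> d s v = d s x + l {x, y} + d y v"
  by (rule bridge_cut.tdist_through_bridge[OF cut])

lemma d_from_complement: "s \<in> V - A \<Longrightarrow> v \<in> A \<Longrightarrow> d s v = d s y + l {x, y} + d x v"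
  using bridge_cut.tdist_through_bridge[OF bridge_cut.swap[OF cut]] by (simp add: insert_commute)

lemma d_eq_within_complement: "s \<in> V - A \<Longrightarrow> v \<in> V - A \<Longrightarrow> d s v = tdist (V - A) E l s v"
  by (rule bridge_cut.tdist_within[OF bridge_cut.swap[OF cut]])

lemma d_eq_within_comp: "s \<in> A \<Longrightarrow> v \<in> A \<Longrightarrow> d s v = tdist A E l s v"
  by (rule bridge_cut.tdist_within[OF cut])

lemma d_bridge_from_comp: "s \<in> A \<Longrightarrow> d s y = d s x + l {x, y}"
  using d_from_comp[of s y] d_self y_in_V y_notin_comp by simp

lemma d_via_y: "s \<in> A \<Longrightarrow> v \<in> V - A \<Longrightarrow> d s v = d s y + d y v"
  using d_from_comp[of s v] d_from_comp[of s y] d_self y_in_V y_notin_comp by simp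

lemma expanded_edge_iff:
  assumes "a \<in> V" "b \<in> V" "{a, b} \<noteq> {x, y}"
  shows "{a, b} \<in> E' \<longleftrightarrow> {a, b} \<in> E"
  using assms fresh by (auto simp: exp_E_def doubleton_eq_iff)

lemma expanded_length_old: "e \<in> E \<Longrightarrow> l' e = l e"
  using edge_subset fresh by (auto simp: exp_len_def)

lemma expanded_length_new: "l' {x, y'} = l {x, y}" "l' {y', y} = eps"
  using x_neq_y x_in_V y_in_V fresh by (auto simp: exp_len_def doubleton_eq_iff)

lemma expanded_nonneg: "\<forall>e\<in>E'. 0 \<le> l' e"
  using nonneg expanded_length_old expanded_length_new eps_pos edge
  by (auto simp: exp_E_def insert_commute)

lemma expanded_edges_cases:
  assumes "{a, b} \<in> E'"
  obtains "{a, b} \<in> E" "{a, b} \<noteq> {x, y}" | "{a, b} = {x, y'}" | "{a, b} = {y', y}"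
  using assms by (auto simp: exp_E_def insert_commute)

lemma expanded_keeps_old:
  assumes "W \<subseteq> V" "x \<notin> W \<or> y \<notin> W"
  shows "tdist W E' l' = tdist W E l" "connected_graph W E' \<longleftrightarrow> connected_graph W E"
proof -
  have edges: "{a, b} \<in> E \<longleftrightarrow> {a, b} \<in> E'" if "a \<in> W" "b \<in> W" for a b
    using expanded_edge_iff[of a b] assms that by (auto simp: doubleton_eq_iff)
  show "tdist W E' l' = tdist W E l"
    using edges expanded_length_old by (intro tdist_cong[symmetric]) auto
  show "connected_graph W E' \<longleftrightarrow> connected_graph W E"
    using reachable_cong[of W E E', OF edges] by (simp add: connected_graph_def)
qed

lemma expanded_keeps_comp:
  "tdist A E' l' = tdist A E l" "connected_graph A E'"
  using expanded_keeps_old[of A] comp_subset connected_comp by auto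

lemma expanded_keeps_complement:
  "tdist (V - A) E' l' = tdist (V - A) E l" "connected_graph (V - A) E'"
  using expanded_keeps_old[of "V - A"] x_in_comp connected_comp_complement by auto

lemma cut_expanded: "bridge_cut (exp_V V y') E' l' (insert y' A) (V - A) y' y"
proof
  show "exp_V V y' = insert y' A \<union> (V - A)" "insert y' A \<inter> (V - A) = {}"
    using comp_subset fresh by (auto simp: exp_V_def)
  show "{y', y} \<in> E'" by (auto simp: exp_E_def)
  show "a = y' \<and> b = y" if ab: "{a, b} \<in> E'" "a \<in> insert y' A" "b \<in> V - A" for a b
    using ab(1)
  proof (cases rule: expanded_edges_cases)
    case 1
    then show ?thesis using ab edge_ends[of a b] fresh comp_only_bridge[of a b] by auto
  next
    case 2
    then show ?thesis using ab x_in_comp fresh by (auto simp: doubleton_eq_iff)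
  next
    case 3
    then show ?thesis using ab y_notin_comp fresh y_in_V by (auto simp: doubleton_eq_iff)
  qed
  show "connected_graph (insert y' A) E'"
    using connected_graph_Un_edge[OF expanded_keeps_comp(2) connected_graph_singleton x_in_comp,
        of y' y'] by (simp add: exp_E_def)
qed (use expanded_nonneg y_in_V y_notin_comp expanded_keeps_complement in auto)

lemma cut_pendant: "bridge_cut (insert y' A) E' l' A {y'} x y'"
proof
  show "a = x \<and> b = y'" if ab: "{a, b} \<in> E'" "a \<in> A" "b \<in> {y'}" for a b
    using ab(1)
  proof (cases rule: expanded_edges_cases)
    case 1
    then show ?thesis using ab edge_ends[of a b] fresh by auto
  next
    case 2
    then show ?thesis using ab comp_subset fresh by (auto simp: doubleton_eq_iff)
  next
    case 3
    then show ?thesis using ab y_notin_comp comp_subset fresh by (auto simp: doubleton_eq_iff)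
  qed
qed (use expanded_nonneg comp_subset fresh x_in_comp expanded_keeps_comp connected_graph_singleton
      in \<open>auto simp: exp_E_def\<close>)

lemma d'_from_comp:
  assumes s: "s \<in> A" and v: "v \<in> exp_V V y'"
  shows "d' s v = (if v = y' then d s y else if v \<in> A then d s v else d s v + eps)"
proof -
  have pendant_self: "tdist {y'} E' l' y' y' = 0"
    by (simp add: tdist_self[OF expanded_nonneg])
  have to_y': "tdist (insert y' A) E' l' s y' = d s y"
    using bridge_cut.tdist_across[OF cut_pendant s] pendant_self expanded_keeps_comp(1)
      expanded_length_new d_eq_within_comp[OF s x_in_comp] d_from_comp[OF s, of y]
      d_self y_in_V y_notin_comp
    by simp
  consider "v = y'" | "v \<in> A" | "v \<in> V - A" "v \<noteq> y'"
    using v fresh by (auto simp: exp_V_def)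
  then show ?thesis
  proof cases
    case 1
    then show ?thesis using bridge_cut.tdist_within[OF cut_expanded] s to_y' by simp
  next
    case 2
    then have "v \<noteq> y'" using fresh comp_subset by auto
    then show ?thesis
      using 2 s bridge_cut.tdist_within[OF cut_expanded] bridge_cut.tdist_within[OF cut_pendant]
        expanded_keeps_comp(1) d_eq_within_comp
      by simp
  next
    case 3
    then show ?thesis
      using bridge_cut.tdist_across[OF cut_expanded, of s v] s to_y' expanded_length_new
        expanded_keeps_complement(1) d_eq_within_complement[of y v] y_in_V y_notin_comp
        d_via_y[OF s, of v]
      by simp
  qed
qed

lemma d'_from_complement:
  assumes s: "s \<in> V - A" and v: "v \<in> exp_V V y'"
  shows "d' s v = (if v = y' then d s y + eps else if v \<in> A then d s v + eps else d s v)"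
proof -
  have pendant_self: "tdist (insert y' A) E' l' y' y' = 0"
    by (simp add: tdist_self[OF expanded_nonneg])
  have s_y: "tdist (V - A) E' l' s y = d s y"
    using expanded_keeps_complement(1) d_eq_within_complement s y_in_V y_notin_comp by simp
  have across: "d' s w = d s y + eps + tdist (insert y' A) E' l' y' w" if "w \<in> insert y' A" for w
    using bridge_cut.tdist_across[OF bridge_cut.swap[OF cut_expanded] s that] s_y
      expanded_length_new
    by (simp add: insert_commute)
  consider "v = y'" | "v \<in> A" | "v \<in> V - A" "v \<noteq> y'"
    using v fresh by (auto simp: exp_V_def)
  then show ?thesis
  proof cases
    case 1
    then show ?thesis using across pendant_self by simp
  next
    case 2
    have "tdist (insert y' A) E' l' y' v = l {x, y} + d x v"
      using bridge_cut.tdist_across[OF bridge_cut.swap[OF cut_pendant] _ 2]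
        tdist_self[OF expanded_nonneg, of y' "{y'}"] expanded_length_new expanded_keeps_comp(1)
        d_eq_within_comp[OF x_in_comp 2]
      by (simp add: insert_commute)
    moreover have "v \<noteq> y'" using 2 fresh comp_subset by auto
    ultimately show ?thesis using across 2 d_from_complement[OF s 2] by simp
  next
    case 3
    then show ?thesis
      using s bridge_cut.tdist_within[OF bridge_cut.swap[OF cut_expanded]]
        expanded_keeps_complement(1) d_eq_within_complement
      by simp
  qed
qed

lemma d'_eq:
  assumes "s \<in> V" "v \<in> exp_V V y'"
  shows "d' s v = d s (if v = y' then y else v) + (if s \<in> A \<longleftrightarrow> v \<in> insert y' A then 0 else eps)"
  using d'_from_comp[OF _ assms(2)] d'_from_complement[OF _ assms(2)] assms(1) fresh comp_subset
  by (cases "s \<in> A") auto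

end

section \<open>Voronoi cells after expanding an edge\<close>

definition nearest :: "('v \<Rightarrow> 'v \<Rightarrow> real) \<Rightarrow> 'v set \<Rightarrow> 'v \<Rightarrow> 'v \<Rightarrow> bool" where
  "nearest d \<Sigma> c v \<longleftrightarrow> (\<forall>c'\<in>\<Sigma>. d c v \<le> d c' v)"

lemma cell_eq_nearest: "cell V E l c \<Sigma> = {v \<in> V. nearest (tdist V E l) \<Sigma> c v}"
  by (simp add: cell_def nearest_def)

lemma nearest_exists:
  assumes "finite \<Sigma>" "\<Sigma> \<noteq> {}"
  obtains c where "c \<in> \<Sigma>" "nearest d \<Sigma> c v"
proof -
  have "Min ((\<lambda>c. d c v) ` \<Sigma>) \<in> (\<lambda>c. d c v) ` \<Sigma>"
    using assms by (intro Min_in) auto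
  then obtain c where "c \<in> \<Sigma>" "d c v = Min ((\<lambda>c. d c v) ` \<Sigma>)" by auto
  then show ?thesis
    using that assms(1) by (simp add: nearest_def)
qed

lemma minimal_with_penalty_iff:
  fixes f :: "'a \<Rightarrow> real"
  assumes m: "m \<in> M" "P m" "\<forall>c\<in>M. f m \<le> f c" and eps: "0 < eps" and c: "c \<in> M"
  shows "(\<forall>c'\<in>M. f c + (if P c then 0 else eps) \<le> f c' + (if P c' then 0 else eps)) \<longleftrightarrow>
    (\<forall>c'\<in>M. f c \<le> f c') \<and> P c"
proof
  assume min: "\<forall>c'\<in>M. f c + (if P c then 0 else eps) \<le> f c' + (if P c' then 0 else eps)"
  then have "f c + (if P c then 0 else eps) \<le> f m" using m by force
  moreover have "f m \<le> f c" using m c by blast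
  ultimately have "P c" using eps by (auto split: if_splits)
  with \<open>f c + (if P c then 0 else eps) \<le> f m\<close> have "f c \<le> f m" by simp
  then show "(\<forall>c'\<in>M. f c \<le> f c') \<and> P c"
    using m(3) \<open>P c\<close> by force
next
  assume "(\<forall>c'\<in>M. f c \<le> f c') \<and> P c"
  then show "\<forall>c'\<in>M. f c + (if P c then 0 else eps) \<le> f c' + (if P c' then 0 else eps)"
    using eps by (auto intro: add_increasing2)
qed

text \<open>Here a plays the role of s_1: the conditions x \<in> W_1 and y \<in> U_1 - W_1 become the
  assumptions on x and y.\<close>

locale expanded_voronoi = edge_expansion V E x y l y' eps
  for V :: "'v set" and E x y l y' eps +
  fixes sites :: "'v set" and a :: 'v
  assumes finite_sites: "finite sites" and sites_subset: "sites \<subseteq> V" and a_site: "a \<in> sites"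
    and x_nearest_only_a: "\<And>c. c \<in> sites \<Longrightarrow> nearest (tdist V E l) sites c x \<longleftrightarrow> c = a"
    and a_nearest_y: "nearest (tdist V E l) sites a y"
    and y_tie: "\<exists>t\<in>sites - {a}. nearest (tdist V E l) sites t y"
begin

lemma a_in_comp: "a \<in> A"
proof (rule ccontr)
  assume "a \<notin> A"
  then have a: "a \<in> V - A" using a_site sites_subset by auto
  obtain t where t: "t \<in> sites" "t \<noteq> a" "nearest d sites t y" using y_tie by auto
  have "d t x \<le> d t y + d y x"
    using d_triangle t(1) sites_subset x_in_V y_in_V by blast
  also have "\<dots> \<le> d a y + l {x, y}"
    using d_edge t(3) a_site by (auto simp: nearest_def)
  also have "\<dots> = d a x"
    using d_from_complement[OF a x_in_comp] d_self x_in_V by simp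
  finally have "nearest d sites t x"
    using x_nearest_only_a[OF a_site] by (force simp: nearest_def)
  then show False using x_nearest_only_a t by blast
qed

lemma comp_site_farther_from_y:
  assumes c: "c \<in> sites" "c \<in> A" "c \<noteq> a"
  shows "d a y < d c y"
proof (rule ccontr)
  assume "\<not> d a y < d c y"
  then have "d c x \<le> d a x"
    using d_bridge_from_comp[OF c(2)] d_bridge_from_comp[OF a_in_comp] by simp
  then have "nearest d sites c x"
    using x_nearest_only_a[OF a_site] by (force simp: nearest_def)
  then show False using x_nearest_only_a c by blast
qed

lemma a_beats_complement_sites:
  assumes c: "c \<in> sites" "c \<notin> A" and v: "v \<in> A"
  shows "d a v < d c v"
proof -
  have "d a v \<le> d a x + d x v"
    using d_triangle a_site sites_subset x_in_V v comp_subset by blast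
  also have "\<dots> = d a y - l {x, y} + d x v"
    using d_bridge_from_comp[OF a_in_comp] by simp
  also have "\<dots> < d c y + l {x, y} + d x v"
    using a_nearest_y c(1) bridge_length_pos by (auto simp: nearest_def)
  also have "\<dots> = d c v"
    using d_from_complement[OF _ v] c sites_subset by auto
  finally show ?thesis .
qed

lemma nearest_site_on_side:
  assumes v: "v \<in> exp_V V y'"
  obtains m where "m \<in> sites" "nearest d sites m (if v = y' then y else v)"
    "m \<in> A \<longleftrightarrow> v \<in> insert y' A"
proof -
  consider "v = y'" | "v \<in> A" | "v \<in> V - A" "v \<noteq> y'"
    using v by (auto simp: exp_V_def)
  then show ?thesis
  proof cases
    case 1
    then show ?thesis using that a_site a_nearest_y a_in_comp by auto
  next
    case 2
    obtain m where m: "m \<in> sites" "nearest d sites m v"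
      using nearest_exists[OF finite_sites] a_site by blast
    then have "m \<in> A"
      using a_beats_complement_sites[OF _ _ 2] a_site by (force simp: nearest_def)
    moreover have "v \<noteq> y'" using 2 fresh comp_subset by auto
    ultimately show ?thesis using that m 2 by auto
  next
    case 3
    obtain m where m: "m \<in> sites" "nearest d sites m v"
      using nearest_exists[OF finite_sites] a_site by blast
    show ?thesis
    proof (cases "m \<in> A")
      case False
      then show ?thesis using that m 3 by auto
    next
      case True
      obtain t where t: "t \<in> sites" "t \<noteq> a" "nearest d sites t y" using y_tie by auto
      have "t \<notin> A"
        using comp_site_farther_from_y[OF t(1) _ t(2)] t(3) a_site by (force simp: nearest_def)
      have "d t v \<le> d t y + d y v"
        using d_triangle t(1) sites_subset y_in_V 3 by blast
      also have "\<dots> \<le> d m y + d y v" using t(3) m(1) by (simp add: nearest_def)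
      also have "\<dots> = d m v" using d_via_y[OF True 3(1)] by simp
      finally have "nearest d sites t v" using m(2) by (force simp: nearest_def)
      then show ?thesis using that t(1) \<open>t \<notin> A\<close> 3 by auto
    qed
  qed
qed

lemma nearest_expanded_iff:
  assumes c: "c \<in> sites" and v: "v \<in> exp_V V y'"
  shows "nearest d' sites c v \<longleftrightarrow>
    nearest d sites c (if v = y' then y else v) \<and> (c \<in> A \<longleftrightarrow> v \<in> insert y' A)"
proof -
  obtain m where "m \<in> sites" "nearest d sites m (if v = y' then y else v)"
    "m \<in> A \<longleftrightarrow> v \<in> insert y' A"
    using nearest_site_on_side[OF v] .
  then show ?thesis
    using minimal_with_penalty_iff[where f = "\<lambda>c. d c (if v = y' then y else v)"
        and P = "\<lambda>c. c \<in> A \<longleftrightarrow> v \<in> insert y' A", OF _ _ _ eps_pos c]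
      d'_eq[OF _ v] sites_subset c
    by (simp add: nearest_def subset_iff)
qed

lemma nearest_other_site_same_side:
  assumes c: "c \<in> sites" "c \<noteq> a" and v: "v \<in> V" and near: "nearest d sites c v"
  shows "c \<in> A \<longleftrightarrow> v \<in> A"
proof
  assume "c \<in> A"
  show "v \<in> A"
  proof (rule ccontr)
    assume "v \<notin> A"
    moreover have "d c v \<le> d a v" using near a_site by (simp add: nearest_def)
    ultimately have "d c y + d y v \<le> d a y + d y v"
      using d_via_y[OF \<open>c \<in> A\<close>] d_via_y[OF a_in_comp] v by simp
    then show False using comp_site_farther_from_y[OF c(1) \<open>c \<in> A\<close> c(2)] by simp
  qed
next
  assume "v \<in> A"
  then show "c \<in> A"
    using a_beats_complement_sites[OF c(1)] near a_site by (force simp: nearest_def)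
qed

lemma cell_expanded_a: "cell (exp_V V y') E' l' a sites = insert y' (cell V E l a sites \<inter> A)"
  using nearest_expanded_iff[OF a_site] a_in_comp a_nearest_y comp_subset fresh
  by (auto simp: cell_eq_nearest exp_V_def)

lemma cell_expanded_other:
  assumes c: "c \<in> sites" "c \<noteq> a"
  shows "cell (exp_V V y') E' l' c sites = cell V E l c sites"
proof (rule set_eqI)
  fix v
  show "v \<in> cell (exp_V V y') E' l' c sites \<longleftrightarrow> v \<in> cell V E l c sites"
  proof (cases "v = y'")
    case True
    then show ?thesis
      using nearest_expanded_iff[OF c(1), of y'] comp_site_farther_from_y[OF c(1) _ c(2)] a_site fresh
      by (force simp: cell_eq_nearest nearest_def exp_V_def)
  next
    case False
    then show ?thesis
      using nearest_expanded_iff[OF c(1), of v] nearest_other_site_same_side[OF c, of v]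
      by (auto simp: cell_eq_nearest exp_V_def)
  qed
qed

end

lemma expanded_voronoi_solution:
  assumes inst: "gen_instance V E l k U S"
    and sol: "is_solution V E l k U S s"
    and k1: "1 \<le> k"
    and edge: "{x, y} \<in> E"
    and xW: "x \<in> Wset k U 1"
    and yU: "y \<in> U 1 - Wset k U 1"
    and eps: "eps > 0"
    and fresh: "y' \<notin> V"
  shows "expanded_voronoi V E x y l y' eps (s ` {1..k}) (s 1)"
proof -
  interpret edge_expansion V E x y l y' eps
    using inst edge fresh eps by unfold_locales (auto simp: gen_instance_def)
  have cell: "U i = {v \<in> V. nearest d (s ` {1..k}) (s i) v}" if "i \<in> {1..k}" for i
    using sol that by (simp add: is_solution_def cell_eq_nearest)
  have x_only_1: "x \<in> U i \<longleftrightarrow> i = 1" if "i \<in> {1..k}" for i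
    using xW that by (auto simp: Wset_def)
  show ?thesis
  proof
    show "finite (s ` {1..k})" by simp
    show "s ` {1..k} \<subseteq> V"
      using sol inst unfolding is_solution_def gen_instance_def by blast
    show "s 1 \<in> s ` {1..k}" using k1 by simp
    show "nearest d (s ` {1..k}) c x \<longleftrightarrow> c = s 1" if "c \<in> s ` {1..k}" for c
      using that cell x_only_1 x_in_V k1 by fastforce
    show "nearest d (s ` {1..k}) (s 1) y"
      using yU cell k1 by auto
    have "\<exists>j\<in>{1..k} - {1}. y \<in> U j"
      using yU by (auto simp: Wset_def)
    then obtain j where "j \<in> {1..k}" "j \<noteq> 1" "y \<in> U j" by blast
    moreover have "s j \<noteq> s 1"
      using x_only_1 cell k1 \<open>j \<in> {1..k}\<close> \<open>j \<noteq> 1\<close> by fastforce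
    ultimately show "\<exists>t\<in>s ` {1..k} - {s 1}. nearest d (s ` {1..k}) t y"
      using cell by auto
  qed
qed

theorem lemma16:
  fixes V :: "'v set" and E :: "'v set set" and l :: "'v set \<Rightarrow> real"
    and k :: nat and U S :: "nat \<Rightarrow> 'v set" and s :: "nat \<Rightarrow> 'v"
    and x y y' :: 'v and eps :: real
  assumes inst: "gen_instance V E l k U S"
    and k1: "1 \<le> k"
    and SW: "\<forall>i \<in> {1..k}. S i \<subseteq> Wset k U i"
    and edge: "{x, y} \<in> Eset E k U 1"
    and xW: "x \<in> Wset k U 1"
    and yU: "y \<in> U 1 - Wset k U 1"
    and eps: "eps > 0"
    and fresh: "y' \<notin> V"
    and sol: "is_solution V E l k U S s"
  shows "is_solution (exp_V V y') (exp_E E x y y') (exp_len l x y y' eps) k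
           (U(1 := exp_U1 V E U x y y')) S s"
proof -
  have "{x, y} \<in> E" using edge by (auto simp: Eset_def)
  then interpret expanded_voronoi V E x y l y' eps "s ` {1..k}" "s 1"
    using expanded_voronoi_solution[OF inst sol k1 _ xW yU eps fresh] by simp
  have cell: "U i = cell V E l (s i) (s ` {1..k})" if "i \<in> {1..k}" for i
    using sol that by (simp add: is_solution_def)
  have "s i \<noteq> s 1" if "i \<in> {1..k}" "i \<noteq> 1" for i
  proof
    assume "s i = s 1"
    then have "U i = U 1" using cell that(1) k1 by simp
    then show False using xW that by (auto simp: Wset_def)
  qed
  then show ?thesis
    using sol cell cell_expanded_a cell_expanded_other k1
    by (auto simp: is_solution_def exp_U1_def)
qed

end
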